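(* Let $T>0$. For $n=0,1,2,\dots$ let $\mathcal{H}_n(x,t)$ denote the two-dimensional Hermite polynomials defined for $t>0$ by $$\mathcal{H}_{n}(x,t)=\frac{(-t)^n}{n!}\,e^{\frac{x^2}{2t}}\frac{d^n}{dx^n}\Big(e^{-\frac{x^2}{2t}}\Big),$$ and $\mathcal{H}_n(x,0)=\frac{x^n}{n!}$ (equivalently, $\mathcal{H}_0=1$, $\mathcal{H}_{-1}=0$, $(n+1)\mathcal{H}_{n+1}(x,t)=x\,\mathcal{H}_n(x,t)-t\,\mathcal{H}_{n-1}(x,t)$; e.g. $\mathcal{H}_1=x$, $\mathcal{H}_2=\frac{x^2}{2}-\frac{t}{2}$). For each $n\ge 0$ let $\{\mathcal{P}_{m,n}(t)\}_{m=0}^{\infty}$ be the family of orthogonal polynomials on $(0,T)$ with respect to the weight $\omega_n(t)=t^n$, where $\mathcal{P}_{m,n}$ has degree $m$, i.e. $\int_0^T t^n\,\mathcal{P}_{r,n}(t)\mathcal{P}_{s,n}(t)\,dt=0$ for $r\neq s$. Then every polynomial in the two variables $t$ and $x$ lies in the linear span of the set $\{\mathcal{P}_{m,n}(t)\,\mathcal{H}_n(x,t)\}_{m,n=0}^{\infty}$.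
   Context: The set $\{\mathcal{P}_{m,n}(t)\mathcal{H}_n(x,t)\}_{m,n\ge 0}$ is orthogonal in the space $\mathbb{L}^2_{\gamma_t}(\mathbb{R}\times[0,T])$ of functions $f(x,t)$ with $\int_0^T\int_{-\infty}^{\infty} f(x,t)^2\gamma_t\,dx\,dt<\infty$, where $\gamma_t=\frac{1}{\sqrt{2\pi t}}e^{-x^2/(2t)}$. *)

theory Defs
  imports "HOL-Analysis.Analysis" "HOL-Computational_Algebra.Polynomial"
begin

fun hermite2 :: "nat \<Rightarrow> real \<Rightarrow> real \<Rightarrow> real" where
  "hermite2 0 x t = 1"
| "hermite2 (Suc 0) x t = x"
| "hermite2 (Suc (Suc n)) x t =
     (x * hermite2 (Suc n) x t - t * hermite2 n x t) / real (n + 2)"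

end

theory Submission
  imports Defs "HOL-Library.Function_Algebras"
begin

text \<open>For fixed \<open>n\<close>, the polynomials \<open>P 0 n, P 1 n, \<dots>\<close> have degrees \<open>0, 1, \<dots>\<close>, so every
  \<open>q(t) H\<^sub>n(x,t)\<close> is a combination of the products \<open>P m n (t) H\<^sub>n(x,t)\<close>.
  Multiplication by \<open>x\<close> stays in the span by the three-term recurrence
  \<open>x H\<^sub>n\<^sub>+\<^sub>1 = (n+2) H\<^sub>n\<^sub>+\<^sub>2 + t H\<^sub>n\<close> (and \<open>x H\<^sub>0 = H\<^sub>1\<close>), so induction on the power of \<open>x\<close>
  puts every \<open>x\<^sup>i q(t) H\<^sub>n(x,t)\<close>, in particular every monomial \<open>x\<^sup>i t\<^sup>j\<close>, into the span.\<close>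

lemma sum_fun_apply: "(\<Sum>i\<in>A. f i) x = (\<Sum>i\<in>A. f i x)"
  by (induction A rule: infinite_finite_induct) auto

lemma (in module) span_image_explicit:
  assumes "y \<in> span (f ` A)"
  obtains S u where "finite S" "S \<subseteq> A" "y = (\<Sum>i\<in>S. scale (u i) (f i))"
proof -
  from assms obtain t r where t: "finite t" "t \<subseteq> f ` A" and y: "y = (\<Sum>v\<in>t. scale (r v) v)"
    unfolding span_explicit by blast
  from t(2) obtain S where S: "S \<subseteq> A" "inj_on f S" "t = f ` S"
    by (auto simp: subset_image_inj)
  show ?thesis
  proof (rule that)
    show "finite S"
      using t(1) S by (simp add: finite_image_iff)
    show "y = (\<Sum>i\<in>S. scale (r (f i)) (f i))"
      using y S by (simp add: sum.reindex)
  qed fact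
qed

lemma poly_eq_sum_smult_of_degree_sequence:
  fixes P :: "nat \<Rightarrow> 'a::field poly" and q :: "'a poly"
  assumes P_nz: "\<And>m. P m \<noteq> 0" and P_deg: "\<And>m. degree (P m) = m"
    and "degree q < d"
  shows "\<exists>a. q = (\<Sum>m<d. smult (a m) (P m))"
  using assms(3)
proof (induction d arbitrary: q)
  case 0
  then show ?case by simp
next
  case (Suc d)
  define c where "c = coeff q d / lead_coeff (P d)"
  define r where "r = q - smult c (P d)"
  have "lead_coeff (P d) \<noteq> 0"
    using P_nz by simp
  then have r_coeff: "coeff r d = 0"
    using P_deg[of d] by (simp add: r_def c_def)
  have "degree r \<le> d"
    unfolding r_def using Suc.prems P_deg[of d]
    by (intro degree_diff_le) (auto intro: order.trans[OF degree_smult_le])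
  with r_coeff have "r = 0 \<or> degree r < d"
    by (cases "degree r = d") auto
  then obtain a where a: "r = (\<Sum>m<d. smult (a m) (P m))"
  proof
    assume "r = 0"
    then show ?thesis
      by (intro that[of "\<lambda>_. 0"]) simp
  qed (use Suc.IH that in blast)
  have "q = (\<Sum>m<d. smult (a m) (P m)) + smult c (P d)"
    using a by (simp add: r_def diff_eq_eq)
  also have "\<dots> = (\<Sum>m<Suc d. smult ((a(d := c)) m) (P m))"
    by simp
  finally show ?case by blast
qed

lemma hermite2_mult_x:
  "x * hermite2 (Suc n) x t = real (n + 2) * hermite2 (Suc (Suc n)) x t + t * hermite2 n x t"
  by simp

lemma power_Suc_mult_hermite2_Suc:
  "x ^ Suc i * p * hermite2 (Suc k) x t =
     real (k + 2) * (x ^ i * p * hermite2 (Suc (Suc k)) x t) + x ^ i * (t * p) * hermite2 k x t"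
proof -
  have "x ^ Suc i * p * hermite2 (Suc k) x t = x ^ i * p * (x * hermite2 (Suc k) x t)"
    by (simp only: power_Suc mult_ac)
  also have "\<dots> = real (k + 2) * (x ^ i * p * hermite2 (Suc (Suc k)) x t) +
      x ^ i * (t * p) * hermite2 k x t"
    unfolding hermite2_mult_x by (simp only: distrib_left mult_ac)
  finally show ?thesis .
qed

interpretation bivariate: module "\<lambda>(c::real) (f::'a \<Rightarrow> 'b \<Rightarrow> real) x y. c * f x y"
  by standard (auto simp: fun_eq_iff algebra_simps)

definition hermite_product :: "(nat \<Rightarrow> nat \<Rightarrow> real poly) \<Rightarrow> nat \<Rightarrow> nat \<Rightarrow> real \<Rightarrow> real \<Rightarrow> real"
  where "hermite_product P m n = (\<lambda>x t. poly (P m n) t * hermite2 n x t)"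

context
  fixes P :: "nat \<Rightarrow> nat \<Rightarrow> real poly"
  assumes P_nz: "\<And>m n. P m n \<noteq> 0" and P_deg: "\<And>m n. degree (P m n) = m"
begin

abbreviation hermite_span :: "(real \<Rightarrow> real \<Rightarrow> real) set"
  where "hermite_span \<equiv> bivariate.span (range (case_prod (hermite_product P)))"

lemma poly_times_hermite2_in_span: "(\<lambda>x t. poly q t * hermite2 n x t) \<in> hermite_span"
proof -
  obtain a where a: "q = (\<Sum>m<Suc (degree q). smult (a m) (P m n))"
    using poly_eq_sum_smult_of_degree_sequence[of "\<lambda>m. P m n" q] P_nz P_deg by blast
  have "(\<lambda>x t. poly q t * hermite2 n x t) =
      (\<Sum>m<Suc (degree q). (\<lambda>x t. a m * hermite_product P m n x t))"
    by (subst a) (simp add: fun_eq_iff sum_fun_apply poly_sum hermite_product_def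
        sum_distrib_right mult.assoc del: sum.lessThan_Suc)
  also have "\<dots> \<in> hermite_span"
    by (intro bivariate.span_sum bivariate.span_scale bivariate.span_base) auto
  finally show ?thesis .
qed

lemma power_times_poly_times_hermite2_in_span:
  "(\<lambda>x t. x ^ i * poly q t * hermite2 n x t) \<in> hermite_span"
proof (induction i arbitrary: q n)
  case 0
  then show ?case
    using poly_times_hermite2_in_span by simp
next
  case (Suc i)
  show ?case
  proof (cases n)
    case 0
    have "(\<lambda>x t. x ^ i * poly q t * hermite2 1 x t) =
        (\<lambda>x t. x ^ Suc i * poly q t * hermite2 n x t)"
      using 0 by (simp add: fun_eq_iff mult_ac)
    then show ?thesis
      using Suc.IH[of q 1] by simp
  next
    case (Suc k)
    have "(\<lambda>x t. x ^ Suc i * poly q t * hermite2 n x t) =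
        (\<lambda>x t. real (k + 2) * (x ^ i * poly q t * hermite2 (Suc (Suc k)) x t)) +
        (\<lambda>x t. x ^ i * poly (pCons 0 q) t * hermite2 k x t)"
      using power_Suc_mult_hermite2_Suc
      by (simp add: fun_eq_iff Suc mult_ac del: hermite2.simps power_Suc)
    also have "\<dots> \<in> hermite_span"
      by (rule bivariate.span_add[OF bivariate.span_scale[OF Suc.IH] Suc.IH])
    finally show ?thesis .
  qed
qed

lemma monomial_in_hermite_span: "(\<lambda>x t. x ^ i * t ^ j) \<in> hermite_span"
  using power_times_poly_times_hermite2_in_span[of i "monom 1 j" 0] by (simp add: poly_monom)

end

theorem theorem2:
  fixes T :: real and P :: "nat \<Rightarrow> nat \<Rightarrow> real poly"
  assumes T_pos: "T > 0"
    and P_nz: "\<And>m n. P m n \<noteq> 0"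
    and P_deg: "\<And>m n. degree (P m n) = m"
    and P_orth: "\<And>r s n. r \<noteq> s \<Longrightarrow>
        integral {0..T} (\<lambda>t. t ^ n * poly (P r n) t * poly (P s n) t) = 0"
  shows "\<forall>(c :: nat \<Rightarrow> nat \<Rightarrow> real) (N :: nat).
           \<exists>(S :: (nat \<times> nat) set) (a :: nat \<Rightarrow> nat \<Rightarrow> real). finite S \<and>
             (\<forall>x t. (\<Sum>i\<le>N. \<Sum>j\<le>N. c i j * x ^ i * t ^ j) =
                    (\<Sum>(m, n)\<in>S. a m n * poly (P m n) t * hermite2 n x t))"
proof (intro allI)
  fix c :: "nat \<Rightarrow> nat \<Rightarrow> real" and N :: nat
  have "(\<lambda>x t. \<Sum>i\<le>N. \<Sum>j\<le>N. c i j * x ^ i * t ^ j) =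
      (\<Sum>i\<le>N. \<Sum>j\<le>N. (\<lambda>x t. c i j * (x ^ i * t ^ j)))"
    by (simp add: fun_eq_iff sum_fun_apply mult.assoc)
  also have "\<dots> \<in> hermite_span P"
    by (intro bivariate.span_sum bivariate.span_scale[OF monomial_in_hermite_span[OF P_nz P_deg]])
  finally obtain S u where "finite S" and
    "(\<lambda>x t. \<Sum>i\<le>N. \<Sum>j\<le>N. c i j * x ^ i * t ^ j) =
      (\<Sum>p\<in>S. (\<lambda>x t. u p * case_prod (hermite_product P) p x t))"
    by (rule bivariate.span_image_explicit)
  then show "\<exists>S a. finite S \<and> (\<forall>x t. (\<Sum>i\<le>N. \<Sum>j\<le>N. c i j * x ^ i * t ^ j) =
      (\<Sum>(m, n)\<in>S. a m n * poly (P m n) t * hermite2 n x t))"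
    by (intro exI[of _ S] exI[of _ "\<lambda>m n. u (m, n)"])
      (simp add: fun_eq_iff sum_fun_apply hermite_product_def case_prod_beta mult.assoc)
qed

end
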